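(* Let $\kappa\in\{0,1\}$ and let $\mathbb{M}_\kappa$ be the simply connected complete Riemannian surface of constant curvature $\kappa$. For parameters $l>0$ and $\varepsilon>0$ (with $l<\pi/2$ when $\kappa=1$), consider in $\mathbb{M}_\kappa$ a quadrilateral $x_0x_1zx_2$, with $z$ and $x_0$ on opposite sides of the geodesic through $x_1,x_2$, such that $d(x_0,x_1)=d(x_0,x_2)=2l$, $d(x_1,z)=d(x_2,z)=l$, and the midpoints $y_1$ of $x_0x_1$ and $y_2$ of $x_0x_2$ satisfy $d(y_1,y_2)=\varepsilon$. Then, for $\varepsilon$ small enough, the circumcenter of the triangle $x_0x_1x_2$ lies inside the triangle $y_1y_2z$.
   Context: The quadrilateral is symmetric with respect to the geodesic through $x_0$ and $z$ (the bisector of the angle at $x_0$); the side-lengths are the geodesic distances in $\mathbb{M}_\kappa$. *)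

theory Defs
  imports "HOL-Analysis.Analysis"
begin

text \<open>Model space M_kappa for kappa in {0,1}, realised inside real^3:
  kappa = 0: the Euclidean plane {x. x$3 = 0} with the Euclidean distance;
  kappa = 1: the unit sphere with the great-circle (angular) distance.\<close>

definition Mk :: "real \<Rightarrow> (real^3) set" where
  "Mk \<kappa> = (if \<kappa> = 0 then {x. x$3 = 0} else {x. norm x = 1})"

definition mdist :: "real \<Rightarrow> real^3 \<Rightarrow> real^3 \<Rightarrow> real" where
  "mdist \<kappa> x y = (if \<kappa> = 0 then dist x y else arccos (x \<bullet> y))"

text \<open>Geodesic midpoint of a and b (unique when mdist a b < pi).\<close>
definition is_midpoint :: "real \<Rightarrow> real^3 \<Rightarrow> real^3 \<Rightarrow> real^3 \<Rightarrow> bool" where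
  "is_midpoint \<kappa> a b m \<longleftrightarrow> m \<in> Mk \<kappa> \<and>
     mdist \<kappa> a m = mdist \<kappa> a b / 2 \<and> mdist \<kappa> m b = mdist \<kappa> a b / 2"

text \<open>Signed side of p with respect to the geodesic through a and b:
  plane: orientation determinant; sphere: sign of det[a,b,p], the great circle
  through a and b being the intersection of the sphere with span {a,b}.\<close>
definition side :: "real \<Rightarrow> real^3 \<Rightarrow> real^3 \<Rightarrow> real^3 \<Rightarrow> real" where
  "side \<kappa> a b p = (if \<kappa> = 0
     then (b$1 - a$1) * (p$2 - a$2) - (b$2 - a$2) * (p$1 - a$1)
     else a$1 * (b$2 * p$3 - b$3 * p$2) - a$2 * (b$1 * p$3 - b$3 * p$1)
          + a$3 * (b$1 * p$2 - b$2 * p$1))"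

definition opposite_sides :: "real \<Rightarrow> real^3 \<Rightarrow> real^3 \<Rightarrow> real^3 \<Rightarrow> real^3 \<Rightarrow> bool" where
  "opposite_sides \<kappa> a b p q \<longleftrightarrow> side \<kappa> a b p * side \<kappa> a b q < 0"

text \<open>Circumcenter: the point of M_kappa equidistant from the three vertices;
  on the sphere, the one of the two antipodal candidates at distance < pi/2.\<close>
definition is_circumcenter :: "real \<Rightarrow> real^3 \<Rightarrow> real^3 \<Rightarrow> real^3 \<Rightarrow> real^3 \<Rightarrow> bool" where
  "is_circumcenter \<kappa> a b c q \<longleftrightarrow> q \<in> Mk \<kappa> \<and>
     mdist \<kappa> q a = mdist \<kappa> q b \<and> mdist \<kappa> q b = mdist \<kappa> q c \<and>
     (\<kappa> = 1 \<longrightarrow> mdist \<kappa> q a < pi / 2)"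

text \<open>p lies in the (open) geodesic triangle ABC:
  plane: strict convex combination; sphere: strictly positive linear combination
  (the geodesic triangle is the positive cone over A,B,C intersected with the sphere).\<close>
definition in_triangle :: "real \<Rightarrow> real^3 \<Rightarrow> real^3 \<Rightarrow> real^3 \<Rightarrow> real^3 \<Rightarrow> bool" where
  "in_triangle \<kappa> p A B C \<longleftrightarrow> p \<in> Mk \<kappa> \<and>
     (\<exists>u v w. u > 0 \<and> v > 0 \<and> w > 0 \<and> (\<kappa> = 0 \<longrightarrow> u + v + w = 1) \<and>
        p = u *\<^sub>R A + v *\<^sub>R B + w *\<^sub>R C)"

end

theory Submission
  imports Defs
begin

text \<open>The reflection exchanging x1 and x2 fixes x0, the apex z and the circumcenter c, so z, c and
  y1 + y2 all lie in the span of x0 and x1 + x2 (on the sphere as vectors of \<real>^3, in the plane as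
  affine combinations). In these coordinates c is a positive combination of y1, y2 and z exactly
  when its coefficients are sandwiched between those of y1 + y2 and of z. The coefficients of c
  are read off from its equal inner products with the vertices, the sign of the x0-coefficient of
  z from z and x0 lying on opposite sides of x1 x2; the remaining inequalities hold once the base
  x1 x2 is short, which is what a small \<epsilon> = d(y1, y2) guarantees.\<close>

lemma eq_0_if_orthogonal_to_independent:
  fixes r a b p :: "real^3"
  assumes "r \<bullet> a = 0" "r \<bullet> b = 0" "r \<bullet> p = 0" "side 1 a b p \<noteq> 0"
  shows "r = 0"
proof -
  have e: "r$1*a$1 + r$2*a$2 + r$3*a$3 = 0" "r$1*b$1 + r$2*b$2 + r$3*b$3 = 0"
     "r$1*p$1 + r$2*p$2 + r$3*p$3 = 0"
    using assms(1-3) by (simp_all add: inner_vec_def sum_3 mult.commute)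
  have "side 1 a b p * r$1 = 0" "side 1 a b p * r$2 = 0" "side 1 a b p * r$3 = 0"
    unfolding side_def using e by (simp, algebra)+
  then show ?thesis
    using assms(4) by (simp add: vec_eq_iff forall_3)
qed

lemma symmetric_decomposition:
  fixes p v w q :: "real^3"
  assumes "side 1 v w p \<noteq> 0" "p \<bullet> v = p \<bullet> w" "v \<bullet> v = w \<bullet> w" "q \<bullet> v = q \<bullet> w"
    and "q \<bullet> p = \<alpha> * (p \<bullet> p) + 2 * \<beta> * (p \<bullet> v)"
    and "q \<bullet> v = \<alpha> * (p \<bullet> v) + \<beta> * (v \<bullet> v + v \<bullet> w)"
  shows "q = \<alpha> *\<^sub>R p + \<beta> *\<^sub>R (v + w)"
proof -
  define r where "r = q - (\<alpha> *\<^sub>R p + \<beta> *\<^sub>R (v + w))"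
  have "r \<bullet> v = 0" "r \<bullet> w = 0" "r \<bullet> p = 0"
    using assms(2-6) unfolding r_def
    by (simp_all add: inner_diff_left inner_add_left inner_add_right inner_commute algebra_simps)
  then have "r = 0"
    using eq_0_if_orthogonal_to_independent assms(1) by blast
  then show ?thesis
    unfolding r_def by simp
qed

lemma linear_system_2x2_solvable:
  fixes a b c d e f :: real
  assumes "a * d - b * c \<noteq> 0"
  shows "\<exists>x y. a * x + b * y = e \<and> c * x + d * y = f"
proof -
  define x where "x = (e * d - b * f) / (a * d - b * c)"
  define y where "y = (a * f - e * c) / (a * d - b * c)"
  have "a * x + b * y = e" "c * x + d * y = f"
    unfolding x_def y_def using assms by (simp_all add: divide_simps) (simp_all add: algebra_simps)
  then show ?thesis by blast
qed

lemma cone_combination: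
  fixes x0 x1 x2 y1 y2 z c :: "'a::real_vector"
  assumes "y1 = \<gamma> *\<^sub>R (x0 + x1)" "y2 = \<gamma> *\<^sub>R (x0 + x2)"
    and "c = a0 *\<^sub>R x0 + a1 *\<^sub>R (x1 + x2)" "z = b0 *\<^sub>R x0 + b1 *\<^sub>R (x1 + x2)"
    and "0 < \<gamma>" "0 < a0" "a0 < 2 * a1" "b0 < 0" "b0 < 2 * b1"
  obtains u w where "0 < u" "0 < w" "c = u *\<^sub>R y1 + u *\<^sub>R y2 + w *\<^sub>R z"
    and "2 * \<gamma> * u + b0 * w = a0" "\<gamma> * u + b1 * w = a1"
proof -
  define w where "w = (2 * a1 - a0) / (2 * b1 - b0)"
  define u where "u = (a0 - b0 * w) / (2 * \<gamma>)"
  have w: "0 < w"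
    unfolding w_def using assms(7,9) by simp
  have "b0 * w < 0"
    using w assms(8) by (simp add: mult_neg_pos)
  then have u: "0 < u"
    unfolding u_def using assms(5,6) by simp
  have e1: "2 * \<gamma> * u + b0 * w = a0"
    unfolding u_def using assms(5) by simp
  have "(2 * b1 - b0) * w = 2 * a1 - a0"
    unfolding w_def using assms(9) by simp
  then have e2: "\<gamma> * u + b1 * w = a1"
    using e1 by (simp add: algebra_simps)
  have "u *\<^sub>R y1 + u *\<^sub>R y2 + w *\<^sub>R z
      = (\<gamma> * u + \<gamma> * u + b0 * w) *\<^sub>R x0 + (\<gamma> * u + b1 * w) *\<^sub>R (x1 + x2)"
    unfolding assms(1,2,4) by (simp add: algebra_simps) (simp flip: scaleR_add_left)
  also have "\<dots> = c"
    using e1 e2 assms(3) by (simp add: algebra_simps)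
  finally have "c = u *\<^sub>R y1 + u *\<^sub>R y2 + w *\<^sub>R z" ..
  with that u w e1 e2 show ?thesis by blast
qed

lemma eq_affine_combination_if_diff_eq:
  fixes v x0 x1 x2 :: "'a::real_vector"
  assumes "v - x0 = s *\<^sub>R ((x1 - x0) + (x2 - x0))"
  shows "v = (1 - 2 * s) *\<^sub>R x0 + s *\<^sub>R (x1 + x2)"
proof -
  have "v = x0 + s *\<^sub>R ((x1 - x0) + (x2 - x0))"
    using assms by (simp add: algebra_simps)
  also have "\<dots> = (1 - 2 * s) *\<^sub>R x0 + s *\<^sub>R (x1 + x2)"
    by (simp add: algebra_simps) (simp flip: scaleR_add_left)
  finally show ?thesis .
qed

lemma dist_power2_shift:
  fixes q x x0 :: "'a::real_inner"
  shows "(dist q x)\<^sup>2 = (dist q x0)\<^sup>2 - 2 * ((q - x0) \<bullet> (x - x0)) + (dist x0 x)\<^sup>2"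
proof -
  have "q - x = (q - x0) - (x - x0)"
    by simp
  then show ?thesis
    by (simp add: dist_norm power2_norm_eq_inner norm_minus_commute[of x0 x]
        inner_diff_left inner_diff_right inner_commute)
qed

lemma midpoint_eq_if_half_dist:
  fixes x y m :: "'a::euclidean_space"
  assumes "dist x m = dist x y / 2" "dist m y = dist x y / 2"
  shows "m = (1 / 2) *\<^sub>R (x + y)"
  using assms midpoint_between[of m x y] by (simp add: between midpoint_def)

lemma side_sphere_combination:
  "side 1 a b (u *\<^sub>R p + v *\<^sub>R (a + b)) = u * side 1 a b p"
  unfolding side_def by (simp add: algebra_simps)

lemma side_plane_combination:
  assumes "u + 2 * v = 1"
  shows "side 0 a b (u *\<^sub>R p + v *\<^sub>R (a + b)) = u * side 0 a b p"
proof -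
  have u: "u = 1 - 2 * v" using assms by simp
  show ?thesis unfolding side_def u by (simp add: algebra_simps)
qed

lemma side_plane_eq_side_sphere:
  "side 1 (x1 - x0) (x2 - x0) (axis 3 1) = side 0 x1 x2 x0"
  by (simp add: side_def axis_def algebra_simps)

lemma coefficient_neg_if_opposite_sides:
  assumes "opposite_sides \<kappa> a b q p" "side \<kappa> a b q = u * side \<kappa> a b p"
  shows "u < 0"
proof -
  have "u * (side \<kappa> a b p)\<^sup>2 < 0"
    using assms unfolding opposite_sides_def by (simp add: power2_eq_square mult.assoc)
  then show ?thesis
    by (simp add: mult_less_0_iff)
qed

lemma circumcenter_in_triangle_plane:
  fixes x0 x1 x2 z y1 y2 c :: "real^3"
  assumes "0 < l" and eps: "0 < \<epsilon>" "\<epsilon> < l"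
    and M: "x0 \<in> Mk 0" "x1 \<in> Mk 0" "x2 \<in> Mk 0" "z \<in> Mk 0"
    and opp: "opposite_sides 0 x1 x2 z x0"
    and d: "mdist 0 x0 x1 = 2 * l" "mdist 0 x0 x2 = 2 * l" "mdist 0 x1 z = l" "mdist 0 x2 z = l"
    and mid: "is_midpoint 0 x0 x1 y1" "is_midpoint 0 x0 x2 y2" "mdist 0 y1 y2 = \<epsilon>"
    and circ: "is_circumcenter 0 x0 x1 x2 c"
  shows "in_triangle 0 c y1 y2 z"
proof -
  define a where "a = x1 - x0"
  define b where "b = x2 - x0"
  define e3 :: "real^3" where "e3 = axis 3 1"
  define S where "S = a \<bullet> a + a \<bullet> b"
  have dist: "dist x0 x1 = 2 * l" "dist x0 x2 = 2 * l" "dist z x1 = dist z x2"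
    "dist c x1 = dist c x0" "dist c x2 = dist c x0" "dist y1 y2 = \<epsilon>"
    using d mid circ by (simp_all add: mdist_def is_circumcenter_def dist_commute)
  have y: "y1 = (1 / 2) *\<^sub>R (x0 + x1)" "y2 = (1 / 2) *\<^sub>R (x0 + x2)"
    using mid d by (simp_all add: is_midpoint_def mdist_def midpoint_eq_if_half_dist)
  have ab: "a \<bullet> a = 4 * l\<^sup>2" "b \<bullet> b = 4 * l\<^sup>2"
    using dist(1,2) unfolding a_def b_def
    by (simp_all add: dot_square_norm dist_norm norm_minus_commute power_mult_distrib)
  have "y1 - y2 = (1 / 2) *\<^sub>R (a - b)"
    unfolding y a_def b_def by (simp add: algebra_simps)
  then have "\<epsilon>\<^sup>2 = ((1 / 2) *\<^sub>R (a - b)) \<bullet> ((1 / 2) *\<^sub>R (a - b))"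
    using dist(6) by (simp add: dot_square_norm dist_norm)
  then have "a \<bullet> b = 4 * l\<^sup>2 - 2 * \<epsilon>\<^sup>2"
    using ab by (simp add: inner_diff_left inner_diff_right inner_commute)
  moreover have "0 < \<epsilon>\<^sup>2" "\<epsilon>\<^sup>2 < l\<^sup>2"
    using eps by (simp_all add: power_strict_mono)
  ultimately have S: "4 * l\<^sup>2 < S" "S < 8 * l\<^sup>2"
    unfolding S_def using ab by linarith+
  txt \<open>The normal e3 of the plane serves as the third independent vector.\<close>
  have D: "side 1 a b e3 \<noteq> 0"
    using opp unfolding a_def b_def e3_def side_plane_eq_side_sphere
    by (auto simp: opposite_sides_def)
  have flat: "e3 \<bullet> a = 0" "e3 \<bullet> b = 0" "(c - x0) \<bullet> e3 = 0" "(z - x0) \<bullet> e3 = 0" "e3 \<bullet> e3 = 1"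
    using M circ unfolding a_def b_def e3_def
    by (simp_all add: inner_axis inner_axis' Mk_def is_circumcenter_def)
  have c_inner: "(c - x0) \<bullet> a = 2 * l\<^sup>2" "(c - x0) \<bullet> b = 2 * l\<^sup>2"
    using dist_power2_shift[of c x1 x0] dist_power2_shift[of c x2 x0] dist(1,2,4,5)
    unfolding a_def b_def by (simp_all add: power_mult_distrib)
  define \<rho> where "\<rho> = 2 * l\<^sup>2 / S"
  have "c - x0 = 0 *\<^sub>R e3 + \<rho> *\<^sub>R (a + b)"
    using D flat ab S \<open>0 < l\<close> c_inner unfolding \<rho>_def
    by (intro symmetric_decomposition) (simp_all add: S_def)
  then have c: "c = (1 - 2 * \<rho>) *\<^sub>R x0 + \<rho> *\<^sub>R (x1 + x2)"
    unfolding a_def b_def by (intro eq_affine_combination_if_diff_eq) simp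
  define \<mu> where "\<mu> = (z - x0) \<bullet> a / S"
  have "(z - x0) \<bullet> a = (z - x0) \<bullet> b"
    using dist_power2_shift[of z x1 x0] dist_power2_shift[of z x2 x0] dist(1,2,3)
    unfolding a_def b_def by simp
  then have "z - x0 = 0 *\<^sub>R e3 + \<mu> *\<^sub>R (a + b)"
    using D flat ab S \<open>0 < l\<close> unfolding \<mu>_def
    by (intro symmetric_decomposition) (simp_all add: S_def)
  then have z: "z = (1 - 2 * \<mu>) *\<^sub>R x0 + \<mu> *\<^sub>R (x1 + x2)"
    unfolding a_def b_def by (intro eq_affine_combination_if_diff_eq) simp
  have "1 - 2 * \<mu> < 0"
    using opp by (rule coefficient_neg_if_opposite_sides) (simp add: z side_plane_combination)
  then have z_coeffs: "1 - 2 * \<mu> < 0" "1 - 2 * \<mu> < 2 * \<mu>"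
    by simp_all
  have c_coeffs: "0 < 1 - 2 * \<rho>" "1 - 2 * \<rho> < 2 * \<rho>"
    using S unfolding \<rho>_def by (simp_all add: field_simps)
  obtain u w where "0 < u" "0 < w" "c = u *\<^sub>R y1 + u *\<^sub>R y2 + w *\<^sub>R z"
    and "2 * (1 / 2) * u + (1 - 2 * \<mu>) * w = 1 - 2 * \<rho>" "(1 / 2) * u + \<mu> * w = \<rho>"
    by (rule cone_combination[OF y c z _ c_coeffs z_coeffs]) simp
  moreover from this(4,5) have "u + u + w = 1"
    by (simp add: algebra_simps)
  moreover have "c \<in> Mk 0"
    using circ by (simp add: is_circumcenter_def)
  ultimately show ?thesis
    unfolding in_triangle_def by blast
qed

lemma abs_inner_sphere_le_1: "x \<in> Mk 1 \<Longrightarrow> y \<in> Mk 1 \<Longrightarrow> \<bar>x \<bullet> y\<bar> \<le> 1"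
  using Cauchy_Schwarz_ineq2[of x y] by (simp add: Mk_def)

lemma inner_self_sphere: "x \<in> Mk 1 \<Longrightarrow> x \<bullet> x = 1"
  by (simp add: Mk_def dot_square_norm)

lemma inner_eq_cos_mdist: "x \<in> Mk 1 \<Longrightarrow> y \<in> Mk 1 \<Longrightarrow> x \<bullet> y = cos (mdist 1 x y)"
  using abs_inner_sphere_le_1 by (simp add: mdist_def cos_arccos_abs)

lemma mdist_sphere_bounds: "x \<in> Mk 1 \<Longrightarrow> y \<in> Mk 1 \<Longrightarrow> 0 \<le> mdist 1 x y \<and> mdist 1 x y \<le> pi"
  using abs_inner_sphere_le_1[of x y] by (simp add: mdist_def arccos_bounded)

lemma sphere_midpoint_eq:
  assumes "x \<in> Mk 1" "y \<in> Mk 1" "m \<in> Mk 1"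
    and "x \<bullet> m = c" "m \<bullet> y = c" "x \<bullet> y = 2 * c\<^sup>2 - 1" "0 < c"
  shows "m = (1 / (2 * c)) *\<^sub>R (x + y)"
proof -
  let ?d = "m - (1 / (2 * c)) *\<^sub>R (x + y)"
  have "?d \<bullet> ?d = m \<bullet> m - (1 / c) * (x \<bullet> m + m \<bullet> y) + (1 / (2 * c))\<^sup>2 * (x \<bullet> x + y \<bullet> y + 2 * (x \<bullet> y))"
    by (simp add: inner_simps inner_commute algebra_simps power2_eq_square)
  also have "\<dots> = 0"
    using assms by (simp add: inner_self_sphere field_simps power2_eq_square)
  finally show ?thesis
    by simp
qed

text \<open>For base cosines t = x1 \<bullet> x2 above this value the Gram determinant 1 + t - 2 C^2 of x0 and
  x1 + x2 and the numbers 1 + t \<plusminus> 2 C are positive; here C = x0 \<bullet> x1 = x0 \<bullet> x2.\<close>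
definition base_cos_threshold :: "real \<Rightarrow> real" where
  "base_cos_threshold C = max (2 * C\<^sup>2 - 1) (max (2 * C - 1) (- 1 - 2 * C))"

lemma base_cos_threshold_less_1: "\<bar>C\<bar> < 1 \<Longrightarrow> base_cos_threshold C < 1"
  by (auto simp: base_cos_threshold_def abs_square_less_1)

lemma circumcenter_in_triangle_sphere_gram:
  fixes x0 x1 x2 z c :: "real^3"
  assumes units: "x0 \<in> Mk 1" "x1 \<in> Mk 1" "x2 \<in> Mk 1"
    and opp: "opposite_sides 1 x1 x2 z x0"
    and legs: "x0 \<bullet> x1 = C" "x0 \<bullet> x2 = C" "x1 \<bullet> z = h" "x2 \<bullet> z = h" "0 < h"
    and base_cos: "x1 \<bullet> x2 = t" "base_cos_threshold C < t" "t < 1"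
    and center: "c \<bullet> x0 = k" "c \<bullet> x1 = k" "c \<bullet> x2 = k" "0 < k"
    and "c \<in> Mk 1"
  shows "in_triangle 1 c ((1 / (2 * h)) *\<^sub>R (x0 + x1)) ((1 / (2 * h)) *\<^sub>R (x0 + x2)) z"
proof -
  have base: "2 * C\<^sup>2 - 1 < t" "2 * C - 1 < t" "- 1 - 2 * C < t" "t < 1"
    using base_cos by (simp_all add: base_cos_threshold_def)
  have D: "side 1 x1 x2 x0 \<noteq> 0"
    using opp by (auto simp: opposite_sides_def)
  have gram: "x0 \<bullet> x0 = 1" "x1 \<bullet> x1 = 1" "x2 \<bullet> x2 = 1" "x1 \<bullet> x0 = C" "x2 \<bullet> x1 = t"
    using units legs base_cos by (simp_all add: inner_self_sphere inner_commute)
  let ?det = "1 + t - 2 * C\<^sup>2"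
  have det: "0 < ?det"
    using base by simp
  obtain a0 a1 where a: "a0 + 2 * C * a1 = k" "C * a0 + (1 + t) * a1 = k"
    using linear_system_2x2_solvable[of 1 "1 + t" "2 * C" C k k] det
    by (auto simp: power2_eq_square algebra_simps)
  have c_eq: "c = a0 *\<^sub>R x0 + a1 *\<^sub>R (x1 + x2)"
    using D legs center gram a
    by (intro symmetric_decomposition) (simp_all add: inner_commute algebra_simps)
  have "a0 * ?det = (1 + t) * (a0 + 2 * C * a1) - 2 * C * (C * a0 + (1 + t) * a1)"
    "(2 * a1 - a0) * ?det = (2 + 2 * C) * (C * a0 + (1 + t) * a1) - (1 + t + 2 * C) * (a0 + 2 * C * a1)"
    by (simp_all add: algebra_simps power2_eq_square)
  then have "a0 * ?det = k * (1 + t - 2 * C)" "(2 * a1 - a0) * ?det = k * (1 - t)"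
    unfolding a by (simp_all add: algebra_simps)
  then have "0 < a0 * ?det" "0 < (2 * a1 - a0) * ?det"
    using base center(4) by simp_all
  then have a0: "0 < a0" "a0 < 2 * a1"
    using det by (simp_all add: zero_less_mult_iff)
  obtain b0 b1 where b: "b0 + 2 * C * b1 = z \<bullet> x0" "C * b0 + (1 + t) * b1 = h"
    using linear_system_2x2_solvable[of 1 "1 + t" "2 * C" C "z \<bullet> x0" h] det
    by (auto simp: power2_eq_square algebra_simps)
  have z_eq: "z = b0 *\<^sub>R x0 + b1 *\<^sub>R (x1 + x2)"
    using D legs gram b
    by (intro symmetric_decomposition) (simp_all add: inner_commute algebra_simps)
  have b0: "b0 < 0"
    using opp by (rule coefficient_neg_if_opposite_sides) (simp add: z_eq side_sphere_combination)
  have "(1 + t) * (2 * b1 - b0) = 2 * h - b0 * (1 + t + 2 * C)"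
    using b(2) by (simp add: algebra_simps)
  moreover have "b0 * (1 + t + 2 * C) < 0"
    using b0 base by (simp add: mult_neg_pos)
  ultimately have "0 < (1 + t) * (2 * b1 - b0)"
    using legs(5) by simp
  then have b1: "b0 < 2 * b1"
    using base by (simp add: zero_less_mult_iff)
  obtain u w where "0 < u" "0 < w"
    "c = u *\<^sub>R ((1 / (2 * h)) *\<^sub>R (x0 + x1)) + u *\<^sub>R ((1 / (2 * h)) *\<^sub>R (x0 + x2)) + w *\<^sub>R z"
    using cone_combination[where \<gamma> = "1 / (2 * h)", OF refl refl c_eq z_eq _ a0 b0 b1] legs(5)
    by (metis divide_pos_pos mult_pos_pos zero_less_numeral zero_less_one)
  then show ?thesis
    unfolding in_triangle_def using \<open>c \<in> Mk 1\<close> by auto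
qed

lemma circumcenter_in_triangle_sphere:
  fixes x0 x1 x2 z y1 y2 c :: "real^3"
  assumes l: "0 < l" "l < pi / 2"
    and small: "base_cos_threshold (cos (2 * l)) < 1 - 4 * (cos l)\<^sup>2 * (1 - cos \<epsilon>)"
    and "0 < \<epsilon>"
    and M: "x0 \<in> Mk 1" "x1 \<in> Mk 1" "x2 \<in> Mk 1" "z \<in> Mk 1"
    and "opposite_sides 1 x1 x2 z x0"
    and d: "mdist 1 x0 x1 = 2 * l" "mdist 1 x0 x2 = 2 * l" "mdist 1 x1 z = l" "mdist 1 x2 z = l"
    and mid: "is_midpoint 1 x0 x1 y1" "is_midpoint 1 x0 x2 y2" "mdist 1 y1 y2 = \<epsilon>"
    and circ: "is_circumcenter 1 x0 x1 x2 c"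
  shows "in_triangle 1 c y1 y2 z"
proof -
  define C where "C = cos (2 * l)"
  define h where "h = cos l"
  define t where "t = x1 \<bullet> x2"
  have h: "0 < h"
    unfolding h_def using l by (intro cos_gt_zero_pi) auto
  have C: "C = 2 * h\<^sup>2 - 1"
    unfolding C_def h_def by (rule cos_double_cos)
  have My: "y1 \<in> Mk 1" "y2 \<in> Mk 1" "c \<in> Mk 1"
    using mid circ by (auto simp: is_midpoint_def is_circumcenter_def)
  have legs: "x0 \<bullet> x1 = C" "x0 \<bullet> x2 = C" "x1 \<bullet> z = h" "x2 \<bullet> z = h"
    using d M by (simp_all add: inner_eq_cos_mdist C_def h_def)
  have "x0 \<bullet> y1 = h" "y1 \<bullet> x1 = h" "x0 \<bullet> y2 = h" "y2 \<bullet> x2 = h"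
    using mid d M My by (simp_all add: is_midpoint_def inner_eq_cos_mdist h_def)
  then have y: "y1 = (1 / (2 * h)) *\<^sub>R (x0 + x1)" "y2 = (1 / (2 * h)) *\<^sub>R (x0 + x2)"
    using sphere_midpoint_eq M My legs C h by auto
  have "cos \<epsilon> = y1 \<bullet> y2"
    using mid My by (simp add: inner_eq_cos_mdist)
  also have "\<dots> = (1 + 2 * C + t) / (4 * h\<^sup>2)"
    using M legs h unfolding y t_def
    by (simp add: inner_add_left inner_add_right inner_self_sphere inner_commute power2_eq_square field_simps)
  finally have t_eq: "t = 1 - 4 * h\<^sup>2 * (1 - cos \<epsilon>)"
    using h C by (simp add: field_simps)
  have "\<epsilon> \<le> pi"
    using mid My mdist_sphere_bounds by blast
  then have "cos \<epsilon> < 1"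
    using cos_monotone_0_pi[of 0 \<epsilon>] \<open>0 < \<epsilon>\<close> by simp
  then have "t < 1"
    using t_eq h by simp
  define k where "k = c \<bullet> x0"
  have center: "c \<bullet> x0 = k" "c \<bullet> x1 = k" "c \<bullet> x2 = k"
    using circ M My by (simp_all add: k_def is_circumcenter_def inner_eq_cos_mdist)
  have "0 < k"
    unfolding k_def using circ M My mdist_sphere_bounds[of c x0]
    by (simp add: is_circumcenter_def inner_eq_cos_mdist cos_gt_zero_pi)
  have "base_cos_threshold C < t"
    using small unfolding t_eq C_def h_def .
  then show ?thesis
    unfolding y
    using circumcenter_in_triangle_sphere_gram[where C = C and h = h and t = t and k = k] M
      \<open>opposite_sides 1 x1 x2 z x0\<close> legs h t_def \<open>t < 1\<close> center \<open>0 < k\<close> My(3)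
    by blast
qed

lemma small_angle_cos_bound:
  fixes T a :: real
  assumes "T < 1"
  shows "\<exists>\<epsilon>0>0. \<forall>\<epsilon>. 0 < \<epsilon> \<and> \<epsilon> < \<epsilon>0 \<longrightarrow> T < 1 - a * (1 - cos \<epsilon>)"
proof -
  have "((\<lambda>\<epsilon>. 1 - a * (1 - cos \<epsilon>)) \<longlongrightarrow> 1) (at 0)"
    by (auto intro!: tendsto_eq_intros)
  then have "eventually (\<lambda>\<epsilon>. T < 1 - a * (1 - cos \<epsilon>)) (at 0)"
    using assms by (rule order_tendstoD(1))
  then show ?thesis
    unfolding eventually_at by (auto simp: dist_real_def)
qed

lemma base_cos_threshold_eventually_below:
  assumes "0 < l" "l < pi / 2"
  shows "\<exists>\<epsilon>0>0. \<forall>\<epsilon>. 0 < \<epsilon> \<and> \<epsilon> < \<epsilon>0 \<longrightarrow>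
    base_cos_threshold (cos (2 * l)) < 1 - 4 * (cos l)\<^sup>2 * (1 - cos \<epsilon>)"
proof -
  have "cos (2 * l) < cos 0" "cos pi < cos (2 * l)"
    using assms by (intro cos_monotone_0_pi; simp)+
  then have "base_cos_threshold (cos (2 * l)) < 1"
    by (intro base_cos_threshold_less_1) auto
  then show ?thesis
    by (rule small_angle_cos_bound)
qed

theorem lemma13:
  fixes \<kappa> l :: real
  assumes "\<kappa> \<in> {0, 1}" and "l > 0" and "\<kappa> = 1 \<longrightarrow> l < pi / 2"
  shows "\<exists>\<epsilon>0 > 0. \<forall>\<epsilon>. 0 < \<epsilon> \<and> \<epsilon> < \<epsilon>0 \<longrightarrow>
    (\<forall>x0 x1 x2 z y1 y2 c.
       x0 \<in> Mk \<kappa> \<and> x1 \<in> Mk \<kappa> \<and> x2 \<in> Mk \<kappa> \<and> z \<in> Mk \<kappa> \<and>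
       opposite_sides \<kappa> x1 x2 z x0 \<and>
       mdist \<kappa> x0 x1 = 2 * l \<and> mdist \<kappa> x0 x2 = 2 * l \<and>
       mdist \<kappa> x1 z = l \<and> mdist \<kappa> x2 z = l \<and>
       is_midpoint \<kappa> x0 x1 y1 \<and> is_midpoint \<kappa> x0 x2 y2 \<and>
       mdist \<kappa> y1 y2 = \<epsilon> \<and>
       is_circumcenter \<kappa> x0 x1 x2 c
       \<longrightarrow> in_triangle \<kappa> c y1 y2 z)"
proof (cases "\<kappa> = 0")
  case True
  then show ?thesis
    using circumcenter_in_triangle_plane[of l] \<open>l > 0\<close> by (intro exI[of _ l]) auto
next
  case False
  with assms have "\<kappa> = 1" "l < pi / 2"
    by auto
  moreover obtain \<epsilon>0 where "0 < \<epsilon>0" and "\<forall>\<epsilon>. 0 < \<epsilon> \<and> \<epsilon> < \<epsilon>0 \<longrightarrow>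
      base_cos_threshold (cos (2 * l)) < 1 - 4 * (cos l)\<^sup>2 * (1 - cos \<epsilon>)"
    using base_cos_threshold_eventually_below[of l] \<open>l > 0\<close> calculation by blast
  ultimately show ?thesis
    using circumcenter_in_triangle_sphere[of l] \<open>l > 0\<close> by (intro exI[of _ \<epsilon>0]) auto
qed

end
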